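(* Let $n\ge 1$ and let $G$ be a bipartite multigraph consisting of $n$ matchings $M_1,\dots,M_n$ (not necessarily edge-disjoint), each with at least $2n$ edges. Then $G$ contains a rainbow matching with $n$ edges.
   Context: Each matching $M_i$ is a colour class (colour $i$); if the same pair of vertices is an edge of several $M_i$, these are treated as distinct parallel edges of different colours. A matching is rainbow if it contains at most one edge of each colour. *)

theory Defs
  imports Main
begin

definition is_matching :: "('a \<times> 'b) set \<Rightarrow> bool" where
  "is_matching M \<longleftrightarrow>
     (\<forall>e\<in>M. \<forall>e'\<in>M. e \<noteq> e' \<longrightarrow> fst e \<noteq> fst e' \<and> snd e \<noteq> snd e')"

text \<open>A coloured edge is a pair (i, e) with colour i and e in the colour class M i
(parallel edges of different colours are thus distinct).\<close>

definition is_rainbow_matching ::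
  "(nat \<Rightarrow> ('a \<times> 'b) set) \<Rightarrow> nat set \<Rightarrow> (nat \<times> ('a \<times> 'b)) set \<Rightarrow> bool" where
  "is_rainbow_matching M I R \<longleftrightarrow>
     (\<forall>(i, e)\<in>R. i \<in> I \<and> e \<in> M i) \<and>
     (\<forall>c\<in>R. \<forall>c'\<in>R. c \<noteq> c' \<longrightarrow>
        fst c \<noteq> fst c' \<and> fst (snd c) \<noteq> fst (snd c') \<and> snd (snd c) \<noteq> snd (snd c'))"

end

theory Submission
  imports Defs
begin

text \<open>Suppose colours in a set \<open>I\<close> of size \<open>k\<close> are already matched
by a rainbow matching \<open>R\<close>, and \<open>i\<close> is a new colour. The \<open>k\<close> left endpoints of \<open>R\<close> block at
most \<open>k\<close> edges of the matching \<open>M i\<close>, and likewise the \<open>k\<close> right endpoints, so if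
\<open>M i\<close> has more than \<open>2k\<close> edges one of them is disjoint from \<open>R\<close> and extends it.
Since every class has at least \<open>2n\<close> edges, this never gets stuck before all \<open>n\<close>
colours are used.\<close>

lemma is_matching_inj_on_fst: "is_matching M \<Longrightarrow> inj_on fst M"
  unfolding is_matching_def inj_on_def by blast

lemma is_matching_inj_on_snd: "is_matching M \<Longrightarrow> inj_on snd M"
  unfolding is_matching_def inj_on_def by blast

lemma matching_has_edge_avoiding:
  assumes M: "is_matching M" and A: "finite A" and C: "finite C"
    and big: "infinite M \<or> card A + card C < card M"
  shows "\<exists>e\<in>M. fst e \<notin> A \<and> snd e \<notin> C"
proof (rule ccontr)
  define blocked where "blocked = (fst -` A \<inter> M) \<union> (snd -` C \<inter> M)"
  assume "\<not> ?thesis"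
  then have M_blocked: "M \<subseteq> blocked"
    unfolding blocked_def by blast
  have fin: "finite blocked"
    unfolding blocked_def
    using finite_vimage_IntI[OF A is_matching_inj_on_fst[OF M]]
      finite_vimage_IntI[OF C is_matching_inj_on_snd[OF M]] by blast
  have "card blocked \<le> card (fst -` A \<inter> M) + card (snd -` C \<inter> M)"
    unfolding blocked_def by (rule card_Un_le)
  also have "\<dots> \<le> card A + card C"
    using card_vimage_inj_on_le[OF is_matching_inj_on_fst[OF M] A]
      card_vimage_inj_on_le[OF is_matching_inj_on_snd[OF M] C] by (rule add_mono)
  finally have "card blocked \<le> card A + card C" .
  moreover have "finite M" "card M \<le> card blocked"
    using card_mono[OF fin M_blocked] finite_subset[OF M_blocked fin] by auto
  ultimately show False
    using big by linarith
qed

lemma rainbow_matching_insert: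
  assumes R: "is_rainbow_matching M I R"
    and i: "i \<notin> I" and e: "e \<in> M i"
    and left: "fst e \<notin> fst ` snd ` R" and right: "snd e \<notin> snd ` snd ` R"
  shows "is_rainbow_matching M (insert i I) (insert (i, e) R)"
proof -
  have fresh: "fst c \<noteq> i \<and> fst (snd c) \<noteq> fst e \<and> snd (snd c) \<noteq> snd e" if c: "c \<in> R" for c
  proof -
    have "fst c \<in> I"
      using R c unfolding is_rainbow_matching_def by auto
    moreover have "fst (snd c) \<in> fst ` snd ` R" "snd (snd c) \<in> snd ` snd ` R"
      using c by blast+
    ultimately show ?thesis
      using i left right by metis
  qed
  have "\<forall>(j, f)\<in>insert (i, e) R. j \<in> insert i I \<and> f \<in> M j"
    using R e unfolding is_rainbow_matching_def by auto
  moreover have "\<forall>c\<in>insert (i, e) R. \<forall>c'\<in>insert (i, e) R. c \<noteq> c' \<longrightarrow>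
      fst c \<noteq> fst c' \<and> fst (snd c) \<noteq> fst (snd c') \<and> snd (snd c) \<noteq> snd (snd c')"
  proof (intro ballI impI)
    fix c c' assume c: "c \<in> insert (i, e) R" "c' \<in> insert (i, e) R" "c \<noteq> c'"
    have disjoint: "\<forall>c\<in>R. \<forall>c'\<in>R. c \<noteq> c' \<longrightarrow>
        fst c \<noteq> fst c' \<and> fst (snd c) \<noteq> fst (snd c') \<and> snd (snd c) \<noteq> snd (snd c')"
      using R unfolding is_rainbow_matching_def by (rule conjunct2)
    consider "c = (i, e)" "c' \<in> R" | "c \<in> R" "c' = (i, e)" | "c \<in> R" "c' \<in> R"
      using c by blast
    then show "fst c \<noteq> fst c' \<and> fst (snd c) \<noteq> fst (snd c') \<and> snd (snd c) \<noteq> snd (snd c')"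
    proof cases
      case 1
      then show ?thesis using fresh[of c'] by auto
    next
      case 2
      then show ?thesis using fresh[of c] by auto
    next
      case 3
      then show ?thesis using disjoint c(3) by blast
    qed
  qed
  ultimately show ?thesis
    unfolding is_rainbow_matching_def by (rule conjI)
qed

lemma rainbow_matching_greedy:
  assumes "finite I"
    and "\<And>i. i \<in> I \<Longrightarrow> is_matching (M i)"
    and "\<And>i. i \<in> I \<Longrightarrow> infinite (M i) \<or> 2 * card I \<le> card (M i)"
  shows "\<exists>R. is_rainbow_matching M I R \<and> finite R \<and> card R = card I"
  using assms
proof (induction I rule: finite_induct)
  case empty
  show ?case
    by (intro exI[of _ "{}"]) (simp add: is_rainbow_matching_def)
next
  case (insert i I)
  have "card I \<le> card (insert i I)"
    by (rule card_insert_le)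
  then have "infinite (M j) \<or> 2 * card I \<le> card (M j)" if "j \<in> I" for j
    using insert.prems(2)[of j] that by auto
  with insert.IH insert.prems(1) obtain R
    where R: "is_rainbow_matching M I R" "finite R" "card R = card I"
    by blast
  have "card (fst ` snd ` R) \<le> card I" "card (snd ` snd ` R) \<le> card I"
    using R by (metis card_image_le finite_imageI order_trans)+
  moreover have "infinite (M i) \<or> 2 * card I + 2 \<le> card (M i)"
    using insert by simp
  ultimately obtain e where e: "e \<in> M i" "fst e \<notin> fst ` snd ` R" "snd e \<notin> snd ` snd ` R"
    using matching_has_edge_avoiding[of "M i" "fst ` snd ` R" "snd ` snd ` R"] insert R(2)
    by fastforce
  have "(i, e) \<notin> R"
    using R(1) insert(2) unfolding is_rainbow_matching_def by auto
  then show ?case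
    using rainbow_matching_insert[OF R(1) insert(2) e] R insert(1,2) by auto
qed

theorem mainTheorem2:
  fixes n :: nat and M :: "nat \<Rightarrow> ('a \<times> 'b) set"
  assumes "n \<ge> 1"
    and "\<And>i. i \<in> {1..n} \<Longrightarrow> is_matching (M i)"
    and "\<And>i. i \<in> {1..n} \<Longrightarrow> infinite (M i) \<or> card (M i) \<ge> 2 * n"
  shows "\<exists>R. is_rainbow_matching M {1..n} R \<and> finite R \<and> card R = n"
  using rainbow_matching_greedy[of "{1..n}" M] assms(2,3) by simp

end
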